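(* Let $(X,\alpha,T)$ be a dynamical system with $T=\mathbb{Z}$ or $T=\mathbb{R}$ acting by homeomorphisms on a compact metrizable space $X$. If $f\in E$ and $g\in E^+\setminus\{\alpha^t: t\in T, t\ge0\}$, then $fg\in E^+$.
   Context: $\alpha^t$ are homeomorphisms with $\alpha^{s+t}=\alpha^s\circ\alpha^t$, $\alpha^0=\mathrm{id}$. $E$ is the closure of $\{\alpha^t:t\in T\}$ in $X^X$ (maps $X\to X$, pointwise convergence topology, composition as product) and $E^+$ the closure of $\{\alpha^t:t\ge0\}$. *)

theory Defs
  imports "HOL-Analysis.Analysis"
begin

text \<open>The function type
  'a \<Rightarrow> 'a carries the product topology (pointwise convergence) from Function_Topology.\<close>

definition dyn_system :: "real set \<Rightarrow> (real \<Rightarrow> 'a::metric_space \<Rightarrow> 'a) \<Rightarrow> bool" where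
  "dyn_system T \<alpha> \<longleftrightarrow>
     (T = \<int> \<or> T = UNIV) \<and>
     compact (UNIV :: 'a set) \<and>
     (\<forall>t\<in>T. \<exists>h. homeomorphism UNIV UNIV (\<alpha> t) h) \<and>
     \<alpha> 0 = id \<and>
     (\<forall>s\<in>T. \<forall>t\<in>T. \<alpha> (s + t) = \<alpha> s \<circ> \<alpha> t) \<and>
     continuous_on (T \<times> UNIV) (\<lambda>(t, x). \<alpha> t x)"

definition enveloping :: "real set \<Rightarrow> (real \<Rightarrow> 'a \<Rightarrow> 'a::topological_space) \<Rightarrow> ('a \<Rightarrow> 'a) set" where
  "enveloping T \<alpha> = closure (\<alpha> ` T)"

definition enveloping_plus :: "real set \<Rightarrow> (real \<Rightarrow> 'a \<Rightarrow> 'a::topological_space) \<Rightarrow> ('a \<Rightarrow> 'a) set" where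
  "enveloping_plus T \<alpha> = closure (\<alpha> ` {t\<in>T. 0 \<le> t})"

end

theory Submission
  imports Defs
begin

text \<open>Since g lies in the closure of the forward orbit but not on it, g is a limit of
  \<alpha> t with t arbitrarily large: the part of the orbit with 0 \<le> t \<le> N is compact, hence
  closed, and misses g. So \<alpha> s \<circ> g is a limit of \<alpha> (s + t) with s + t \<ge> 0, i.e. it lies
  in E+ for every s \<in> T. Right composition with g is continuous in the topology of
  pointwise convergence, so it maps E = closure (\<alpha> ` T) into the closed set E+.\<close>

lemma Hausdorff_space_euclidean_t2: "Hausdorff_space (euclidean :: 'a::t2_space topology)"
  unfolding Hausdorff_space_def disjnt_def by (simp add: separation_t2)

lemma compact_imp_closed_fun:
  fixes K :: "('b \<Rightarrow> 'a::t2_space) set"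
  assumes "compact K"
  shows "closed K"
proof -
  have "Hausdorff_space (product_topology (\<lambda>_. euclidean :: 'a topology) (UNIV :: 'b set))"
    by (simp only: Hausdorff_space_product_topology Hausdorff_space_euclidean_t2) simp
  then have "closedin euclidean K"
    unfolding euclidean_product_topology
    by (rule compactin_imp_closedin) (use assms in simp)
  then show ?thesis
    by simp
qed

lemma continuous_on_comp_left_fun:
  fixes f :: "'a::topological_space \<Rightarrow> 'b::topological_space"
  assumes "continuous_on UNIV f"
  shows "continuous_on UNIV (\<lambda>h::'c \<Rightarrow> 'a. f \<circ> h)"
proof (rule continuous_on_coordinatewise_then_product)
  fix x
  have "continuous_on UNIV (f \<circ> (\<lambda>h::'c \<Rightarrow> 'a. h x))"
    by (rule continuous_on_compose) (auto intro: continuous_on_subset[OF assms])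
  then show "continuous_on UNIV (\<lambda>h::'c \<Rightarrow> 'a. (f \<circ> h) x)"
    by (simp add: o_def)
qed

lemma continuous_on_comp_right_fun:
  "continuous_on UNIV (\<lambda>h::'b \<Rightarrow> 'a::topological_space. h \<circ> g)"
  by (rule continuous_on_coordinatewise_then_product) (simp add: o_def)

lemma closure_image_subset_compact_Un:
  fixes f :: "'b::topological_space \<Rightarrow> 'c \<Rightarrow> 'a::t2_space"
  assumes "compact K" and "continuous_on K f"
  shows "closure (f ` S) \<subseteq> f ` K \<union> closure (f ` (S - K))"
proof -
  have "closed (f ` K)"
    using assms by (intro compact_imp_closed_fun compact_continuous_image)
  have "f ` S \<subseteq> f ` K \<union> f ` (S - K)"
    by blast
  then have "closure (f ` S) \<subseteq> closure (f ` K) \<union> closure (f ` (S - K))"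
    by (metis closure_Un closure_mono)
  then show ?thesis
    using \<open>closed (f ` K)\<close> by (simp add: closure_closed)
qed

lemma closure_image_nonneg_tail:
  fixes \<alpha> :: "real \<Rightarrow> 'c \<Rightarrow> 'a::t2_space"
  assumes "closed S" and "continuous_on S \<alpha>"
    and "g \<in> closure (\<alpha> ` {t\<in>S. 0 \<le> t})" and "g \<notin> \<alpha> ` {t\<in>S. 0 \<le> t}"
  shows "g \<in> closure (\<alpha> ` {t\<in>S. N < t})"
proof -
  let ?K = "S \<inter> {0..N}"
  have "compact ?K"
    using \<open>closed S\<close> by (simp add: closed_Int_compact)
  moreover have "continuous_on ?K \<alpha>"
    using assms(2) by (rule continuous_on_subset) blast
  ultimately have "g \<in> \<alpha> ` ?K \<union> closure (\<alpha> ` ({t\<in>S. 0 \<le> t} - ?K))"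
    using assms(3) closure_image_subset_compact_Un by blast
  moreover have "g \<notin> \<alpha> ` ?K"
    using assms(4) by auto
  moreover have "closure (\<alpha> ` ({t\<in>S. 0 \<le> t} - ?K)) \<subseteq> closure (\<alpha> ` {t\<in>S. N < t})"
    by (intro closure_mono image_mono) auto
  ultimately show ?thesis
    by blast
qed

lemma dyn_system_time_closed: "dyn_system T \<alpha> \<Longrightarrow> closed T"
  by (auto simp: dyn_system_def)

lemma dyn_system_time_add: "dyn_system T \<alpha> \<Longrightarrow> s \<in> T \<Longrightarrow> t \<in> T \<Longrightarrow> s + t \<in> T"
  by (auto simp: dyn_system_def)

lemma dyn_system_add: "dyn_system T \<alpha> \<Longrightarrow> s \<in> T \<Longrightarrow> t \<in> T \<Longrightarrow> \<alpha> (s + t) = \<alpha> s \<circ> \<alpha> t"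
  by (simp add: dyn_system_def)

lemma dyn_system_continuous: "dyn_system T \<alpha> \<Longrightarrow> s \<in> T \<Longrightarrow> continuous_on UNIV (\<alpha> s)"
  unfolding dyn_system_def using homeomorphism_cont1 by blast

lemma dyn_system_continuous_on_time:
  assumes "dyn_system T \<alpha>"
  shows "continuous_on T \<alpha>"
proof (rule continuous_on_coordinatewise_then_product)
  fix x
  have "continuous_on (T \<times> UNIV) (\<lambda>(t, x). \<alpha> t x)"
    using assms by (simp add: dyn_system_def)
  then have "continuous_on T ((\<lambda>(t, x). \<alpha> t x) \<circ> (\<lambda>t. (t, x)))"
    by (intro continuous_on_compose) (auto intro!: continuous_intros elim: continuous_on_subset)
  then show "continuous_on T (\<lambda>t. \<alpha> t x)"
    by (simp add: o_def)
qed

lemma dyn_system_comp_left_enveloping_plus: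
  assumes sys: "dyn_system T \<alpha>" and "s \<in> T"
    and "g \<in> enveloping_plus T \<alpha>" and "g \<notin> \<alpha> ` {t\<in>T. 0 \<le> t}"
  shows "\<alpha> s \<circ> g \<in> enveloping_plus T \<alpha>"
proof -
  let ?A = "\<alpha> ` {t\<in>T. \<bar>s\<bar> < t}"
  have "g \<in> closure ?A"
    using assms by (intro closure_image_nonneg_tail dyn_system_time_closed
        dyn_system_continuous_on_time) (auto simp: enveloping_plus_def)
  have "(\<lambda>h. \<alpha> s \<circ> h) ` ?A \<subseteq> enveloping_plus T \<alpha>"
  proof
    fix h assume "h \<in> (\<lambda>h. \<alpha> s \<circ> h) ` ?A"
    then obtain t where "t \<in> T" "\<bar>s\<bar> < t" and h: "h = \<alpha> s \<circ> \<alpha> t"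
      by auto
    then have "h = \<alpha> (s + t)" and "s + t \<in> {t\<in>T. 0 \<le> t}"
      using sys \<open>s \<in> T\<close> by (auto simp: dyn_system_add dyn_system_time_add)
    then show "h \<in> enveloping_plus T \<alpha>"
      unfolding enveloping_plus_def by (metis closure_subset image_eqI subsetD)
  qed
  then have "(\<lambda>h. \<alpha> s \<circ> h) ` closure ?A \<subseteq> enveloping_plus T \<alpha>"
    by (intro image_closure_subset continuous_on_subset[OF continuous_on_comp_left_fun])
      (auto simp: enveloping_plus_def dyn_system_continuous[OF sys \<open>s \<in> T\<close>])
  then show ?thesis
    using \<open>g \<in> closure ?A\<close> by blast
qed

theorem lemma3p5:
  fixes T :: "real set" and \<alpha> :: "real \<Rightarrow> 'a::metric_space \<Rightarrow> 'a"
    and f g :: "'a \<Rightarrow> 'a"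
  assumes "dyn_system T \<alpha>"
    and "f \<in> enveloping T \<alpha>"
    and "g \<in> enveloping_plus T \<alpha>"
    and "g \<notin> \<alpha> ` {t\<in>T. 0 \<le> t}"
  shows "f \<circ> g \<in> enveloping_plus T \<alpha>"
proof -
  have "(\<lambda>h. h \<circ> g) ` (\<alpha> ` T) \<subseteq> enveloping_plus T \<alpha>"
    using assms dyn_system_comp_left_enveloping_plus by blast
  then have "(\<lambda>h. h \<circ> g) ` enveloping T \<alpha> \<subseteq> enveloping_plus T \<alpha>"
    unfolding enveloping_def
    by (intro image_closure_subset continuous_on_subset[OF continuous_on_comp_right_fun])
      (auto simp: enveloping_plus_def)
  then show ?thesis
    using assms(2) by blast
qed

end
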